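(* Let $T>0$. Let $E:[0,T]\times\mathbb{R}^2\to\mathbb{R}^2$ and $b:[0,T]\times\mathbb{R}^2\to\mathbb{R}$ be bounded and Lipschitz (i.e. in $W^{1,\infty}$), with $\inf|b|>0$, and set $B=b\,e_3$. For $\Delta t>0$ and $\varepsilon>0$ set $t^n=n\Delta t$, $\lambda=\Delta t/\varepsilon^2$, and given $(x^0,v^0)\in\mathbb{R}^2\times\mathbb{R}^2$ define $(x^n,v^n)$ by $$\varepsilon\frac{x^{n+1}-x^n}{\Delta t}=v^{n+1},\qquad \varepsilon\frac{v^{n+1}-v^n}{\Delta t}=\frac1\varepsilon v^{n+1}\wedge B(t^n,x^n)+E(t^n,x^n),$$ and $(y^n)$ by $y^0=x^0$ and $\dfrac{y^{n+1}-y^n}{\Delta t}=U(t^n,y^n)$. Then there exist constants $C>0$ and $\lambda_0>0$ depending only on $E$, $b$ and $T$ such that whenever $0<\Delta t\le1$ and $\lambda\ge\lambda_0$, for all $n$ with $t^n\le T$, $$\|x^n-y^n\|\le\frac{C\,\Delta t}{\lambda}\Big[1+\Big\|\frac{v^0}{\varepsilon}-U(t^0,x^0)\Big\|\Big].$$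
   Context: Vectors of $\mathbb{R}^2$ are identified with vectors $(w_1,w_2,0)$ of $\mathbb{R}^3$, $e_3=(0,0,1)$, and $\wedge$ is the cross product; thus for $w\in\mathbb{R}^2$ and $B=b\,e_3$, $w\wedge B=b\,(w_2,-w_1)\in\mathbb{R}^2$. The guiding-center drift is $U(t,x)=\dfrac{E(t,x)\wedge B(t,x)}{\|B(t,x)\|^2}$. *)

theory Defs
  imports "HOL-Analysis.Analysis"
begin

text \<open>Vectors of R^2 are modelled as \<open>real^2\<close>, identified with (w1,w2,0) in R^3.
  For B = b e3, the cross product w \<wedge> B equals b (w2, -w1).\<close>

definition wedge_e3 :: "real^2 \<Rightarrow> real \<Rightarrow> real^2" where
  "wedge_e3 w b = b *\<^sub>R (\<chi> i. if i = 1 then w $ 2 else - (w $ 1))"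

text \<open>Guiding-center drift U(t,x) = E(t,x) \<wedge> B(t,x) / |B(t,x)|^2, with |B| = |b|.\<close>

definition drift :: "(real \<Rightarrow> real^2 \<Rightarrow> real^2) \<Rightarrow> (real \<Rightarrow> real^2 \<Rightarrow> real)
    \<Rightarrow> real \<Rightarrow> real^2 \<Rightarrow> real^2" where
  "drift E b t x = (1 / (b t x)\<^sup>2) *\<^sub>R wedge_e3 (E t x) (b t x)"

end

theory Submission
  imports Defs
begin

text \<open>Write \<open>w\<^sup>n = v\<^sup>n/\<epsilon>\<close>, \<open>\<lambda> = \<Delta>t/\<epsilon>\<^sup>2\<close>, \<open>J w = w \<and> e\<^sub>3\<close> and \<open>U\<^sup>n = U(t\<^sup>n, x\<^sup>n)\<close>. Since
  \<open>E = -b J U\<close>, the velocity update reads \<open>w\<^sup>n\<^sup>+\<^sup>1 - \<lambda> b J w\<^sup>n\<^sup>+\<^sup>1 = w\<^sup>n - \<lambda> b J U\<^sup>n\<close>, so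
  \<open>w\<^sup>n\<^sup>+\<^sup>1 - U\<^sup>n\<close> is \<open>w\<^sup>n - U\<^sup>n\<close> divided by \<open>1 - \<lambda> b J\<close>; as \<open>J\<close> is an isometry orthogonal
  to the identity, this divides the norm by at least \<open>\<lambda> b\<^sub>0\<close>. With the Lipschitz continuity of
  \<open>U\<close>, the gaps \<open>|w\<^sup>n\<^sup>+\<^sup>1 - U\<^sup>n|\<close> therefore at least halve at each step up to an error
  \<open>O(\<Delta>t/\<lambda>)\<close> once \<open>\<lambda>\<close> is large, so they are \<open>2\<^sup>-\<^sup>n |w\<^sup>0 - U\<^sup>0|/(\<lambda> b\<^sub>0) + O(\<Delta>t/\<lambda>)\<close>.
  Since \<open>x\<^sup>n\<^sup>+\<^sup>1 = x\<^sup>n + \<Delta>t w\<^sup>n\<^sup>+\<^sup>1\<close>, the positions follow the explicit Euler scheme for \<open>U\<close>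
  up to \<open>\<Delta>t\<close> times these gaps, and a discrete Gronwall inequality sums the defects to
  \<open>O(\<Delta>t/\<lambda>) (1 + |w\<^sup>0 - U\<^sup>0|)\<close>.\<close>

definition perp :: "real^2 \<Rightarrow> real^2" where
  "perp w = (\<chi> i. if i = 1 then w $ 2 else - (w $ 1))"

lemma wedge_e3_eq_perp: "wedge_e3 w c = c *\<^sub>R perp w"
  by (simp add: wedge_e3_def perp_def)

lemma perp_diff: "perp (v - w) = perp v - perp w"
  by (simp add: perp_def vec_eq_iff)

lemma perp_scaleR: "perp (c *\<^sub>R w) = c *\<^sub>R perp w"
  by (simp add: perp_def vec_eq_iff)

lemma perp_perp: "perp (perp w) = - w"
  by (simp add: perp_def vec_eq_iff forall_2)

lemma inner_perp_self: "inner w (perp w) = 0"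
  by (simp add: perp_def inner_vec_def sum_2)

lemma norm_perp: "norm (perp w) = norm w"
  by (simp add: norm_eq_sqrt_inner perp_def inner_vec_def sum_2)

lemma power2_norm_diff_scaleR_perp: "(norm (w - c *\<^sub>R perp w))\<^sup>2 = (1 + c\<^sup>2) * (norm w)\<^sup>2"
proof -
  have "inner (perp w) (perp w) = inner w w"
    using norm_perp[of w] by (simp add: norm_eq_sqrt_inner)
  then show ?thesis
    unfolding power2_norm_eq_inner
    by (simp add: inner_diff_left inner_diff_right inner_perp_self inner_commute[of "perp w" w]
        algebra_simps power2_eq_square)
qed

lemma norm_relaxation_le:
  assumes "w' - c *\<^sub>R perp w' = w - c *\<^sub>R perp u"
  shows "\<bar>c\<bar> * norm (w' - u) \<le> norm (w - u)"
proof -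
  have "(w' - u) - c *\<^sub>R perp (w' - u) = w - u"
    using assms by (simp add: perp_diff algebra_simps)
  moreover have "(\<bar>c\<bar> * norm (w' - u))\<^sup>2 \<le> (norm ((w' - u) - c *\<^sub>R perp (w' - u)))\<^sup>2"
    unfolding power2_norm_diff_scaleR_perp by (simp add: power_mult_distrib algebra_simps)
  ultimately show ?thesis
    by (metis norm_ge_zero power2_le_imp_le)
qed

lemma drift_eq_perp: "drift E b t x = (1 / b t x) *\<^sub>R perp (E t x)"
  by (simp add: drift_def wedge_e3_eq_perp power2_eq_square)

lemma field_eq_perp_drift: "b t x \<noteq> 0 \<Longrightarrow> E t x = - b t x *\<^sub>R perp (drift E b t x)"
  by (simp add: drift_eq_perp perp_scaleR perp_perp)

lemma norm_drift_le:
  assumes "norm (E t x) \<le> M" "b0 \<le> \<bar>b t x\<bar>" "0 < b0"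
  shows "norm (drift E b t x) \<le> M / b0"
proof -
  have "norm (drift E b t x) = norm (E t x) / \<bar>b t x\<bar>"
    by (simp add: drift_eq_perp norm_perp)
  also have "\<dots> \<le> M / b0"
    using assms order_trans[OF norm_ge_zero assms(1)] by (intro frac_le) auto
  finally show ?thesis .
qed

lemma lipschitz_on_scaleR_inverse:
  fixes f :: "'a::metric_space \<Rightarrow> 'b::real_normed_vector" and g :: "'a \<Rightarrow> real"
  assumes f: "Lf-lipschitz_on S f" and g: "Lg-lipschitz_on S g"
    and f_le: "\<And>p. p \<in> S \<Longrightarrow> norm (f p) \<le> M"
    and g_ge: "\<And>p. p \<in> S \<Longrightarrow> g0 \<le> \<bar>g p\<bar>" and "0 \<le> M" "0 < g0"
  shows "(Lg * M / g0\<^sup>2 + Lf / g0)-lipschitz_on S (\<lambda>p. (1 / g p) *\<^sub>R f p)"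
proof (rule lipschitz_onI)
  fix p q assume p: "p \<in> S" and q: "q \<in> S"
  have gp: "g0 \<le> \<bar>g p\<bar>" and gq: "g0 \<le> \<bar>g q\<bar>" using g_ge p q by auto
  have "\<bar>1 / g p - 1 / g q\<bar> = \<bar>g q - g p\<bar> / (\<bar>g p\<bar> * \<bar>g q\<bar>)"
    using gp gq \<open>0 < g0\<close> by (simp add: diff_frac_eq abs_mult)
  also have "\<dots> \<le> Lg * dist p q / (g0 * g0)"
    using lipschitz_onD[OF g q p] gp gq \<open>0 < g0\<close>
    by (intro frac_le mult_mono) (auto simp: dist_real_def dist_commute)
  finally have inverse_diff: "\<bar>1 / g p - 1 / g q\<bar> \<le> Lg * dist p q / (g0 * g0)" .
  have "dist ((1 / g p) *\<^sub>R f p) ((1 / g q) *\<^sub>R f q)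
      = norm ((1 / g p - 1 / g q) *\<^sub>R f p + (1 / g q) *\<^sub>R (f p - f q))"
    by (simp add: dist_norm algebra_simps)
  also have "\<dots> \<le> \<bar>1 / g p - 1 / g q\<bar> * norm (f p) + norm (f p - f q) / \<bar>g q\<bar>"
    by (rule order_trans[OF norm_triangle_ineq]) simp
  also have "\<dots> \<le> Lg * dist p q / (g0 * g0) * M + Lf * dist p q / g0"
    using inverse_diff lipschitz_onD[OF f p q] gq \<open>0 < g0\<close> f_le[OF p] lipschitz_on_nonneg[OF f]
    by (intro add_mono mult_mono frac_le) (auto simp: dist_norm)
  finally show "dist ((1 / g p) *\<^sub>R f p) ((1 / g q) *\<^sub>R f q) \<le> (Lg * M / g0\<^sup>2 + Lf / g0) * dist p q"
    by (simp add: power2_eq_square algebra_simps)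
next
  show "0 \<le> Lg * M / g0\<^sup>2 + Lf / g0"
    using assms lipschitz_on_nonneg[OF f] lipschitz_on_nonneg[OF g] by simp
qed

lemma lipschitz_on_drift:
  assumes "LE-lipschitz_on S (\<lambda>(t, x). E t x)" "Lb-lipschitz_on S (\<lambda>(t, x). b t x)"
    and "\<And>t x. (t, x) \<in> S \<Longrightarrow> norm (E t x) \<le> M" "\<And>t x. (t, x) \<in> S \<Longrightarrow> b0 \<le> \<bar>b t x\<bar>"
    and "0 \<le> M" "0 < b0"
  shows "(Lb * M / b0\<^sup>2 + LE / b0)-lipschitz_on S (\<lambda>(t, x). drift E b t x)"
proof -
  have quotient: "(Lb * M / b0\<^sup>2 + LE / b0)-lipschitz_on S
      (\<lambda>p. (1 / (\<lambda>(t, x). b t x) p) *\<^sub>R (\<lambda>(t, x). E t x) p)"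
    using assms by (intro lipschitz_on_scaleR_inverse) auto
  show ?thesis
    unfolding lipschitz_on_def
  proof (intro conjI ballI)
    fix p q assume "p \<in> S" "q \<in> S"
    then show "dist ((\<lambda>(t, x). drift E b t x) p) ((\<lambda>(t, x). drift E b t x) q)
        \<le> (Lb * M / b0\<^sup>2 + LE / b0) * dist p q"
      using lipschitz_onD[OF quotient]
      by (auto simp: drift_eq_perp dist_norm perp_scaleR[symmetric] perp_diff[symmetric] norm_perp
          split: prod.splits)
  qed (use quotient lipschitz_on_nonneg in blast)
qed

lemma halving_recurrence_le:
  fixes a :: "nat \<Rightarrow> real"
  assumes "\<And>k. k < n \<Longrightarrow> a (Suc k) \<le> a k / 2 + c" "0 \<le> c"
  shows "a n \<le> (1 / 2) ^ n * a 0 + 2 * c"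
  using assms(1)
proof (induction n)
  case (Suc n)
  then have "a n \<le> (1 / 2) ^ n * a 0 + 2 * c" by simp
  moreover have "a (Suc n) \<le> a n / 2 + c" using Suc.prems by simp
  ultimately show ?case by simp
qed (simp add: \<open>0 \<le> c\<close>)

lemma discrete_gronwall:
  fixes e g :: "nat \<Rightarrow> real"
  assumes "e 0 \<le> 0" "0 \<le> h"
    and step: "\<And>k. k < n \<Longrightarrow> e (Suc k) \<le> (1 + h) * e k + g k"
    and g_nonneg: "\<And>k. k < n \<Longrightarrow> 0 \<le> g k"
  shows "e n \<le> (1 + h) ^ n * (\<Sum>k<n. g k)"
  using step g_nonneg
proof (induction n)
  case 0
  then show ?case using assms(1) by simp
next
  case (Suc n)
  have "e (Suc n) \<le> (1 + h) * ((1 + h) ^ n * (\<Sum>k<n. g k)) + g n"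
    using Suc \<open>0 \<le> h\<close> by (intro order_trans[OF Suc.prems(1)] add_mono mult_left_mono) auto
  also have "\<dots> \<le> (1 + h) ^ Suc n * (\<Sum>k<n. g k) + (1 + h) ^ Suc n * g n"
    using Suc.prems(2)[of n] one_le_power[of "1 + h" "Suc n"] \<open>0 \<le> h\<close>
    by (simp add: mult_le_cancel_right1)
  also have "\<dots> = (1 + h) ^ Suc n * (\<Sum>k<Suc n. g k)"
    by (simp add: algebra_simps)
  finally show ?case .
qed

lemma one_plus_power_le_exp:
  fixes h :: real
  assumes "-1 \<le> h"
  shows "(1 + h) ^ n \<le> exp (real n * h)"
proof -
  have "(1 + h) ^ n \<le> exp h ^ n"
    using assms by (intro power_mono) auto
  then show ?thesis by (simp add: exp_of_nat_mult)
qed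

text \<open>\<open>stiff\<close> is the condition \<open>\<lambda> \<ge> \<lambda>\<^sub>0\<close> of the theorem with \<open>\<lambda>\<^sub>0 = 2 (1 + LU) / b0\<close>.\<close>

locale guiding_center_scheme =
  fixes E :: "real \<Rightarrow> real^2 \<Rightarrow> real^2" and b :: "real \<Rightarrow> real^2 \<Rightarrow> real"
    and T b0 MU LU dt \<epsilon> :: real and x v :: "nat \<Rightarrow> real^2"
  assumes b0_pos: "0 < b0"
    and b_ge: "\<And>t z. t \<in> {0..T} \<Longrightarrow> b0 \<le> \<bar>b t z\<bar>"
    and drift_le: "\<And>t z. t \<in> {0..T} \<Longrightarrow> norm (drift E b t z) \<le> MU"
    and drift_lipschitz: "LU-lipschitz_on ({0..T} \<times> UNIV) (\<lambda>(t, z). drift E b t z)"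
    and dt_pos: "0 < dt" and dt_le_1: "dt \<le> 1" and eps_pos: "0 < \<epsilon>"
    and stiff: "2 * (1 + LU) \<le> dt / \<epsilon>\<^sup>2 * b0"
    and position_step: "\<And>n. \<epsilon> *\<^sub>R ((1 / dt) *\<^sub>R (x (Suc n) - x n)) = v (Suc n)"
    and velocity_step: "\<And>n. \<epsilon> *\<^sub>R ((1 / dt) *\<^sub>R (v (Suc n) - v n))
      = (1 / \<epsilon>) *\<^sub>R wedge_e3 (v (Suc n)) (b (real n * dt) (x n)) + E (real n * dt) (x n)"
begin

definition lam :: real where "lam = dt / \<epsilon>\<^sup>2"

definition w :: "nat \<Rightarrow> real^2" where "w n = (1 / \<epsilon>) *\<^sub>R v n"

definition U :: "nat \<Rightarrow> real^2" where "U n = drift E b (real n * dt) (x n)"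

definition gap :: "nat \<Rightarrow> real" where "gap n = norm (w (Suc n) - U n)"

lemma lam_pos: "0 < lam"
  using dt_pos eps_pos by (simp add: lam_def)

lemma LU_nonneg: "0 \<le> LU"
  using drift_lipschitz by (rule lipschitz_on_nonneg)

lemma MU_nonneg: "0 \<le> T \<Longrightarrow> 0 \<le> MU"
  using order_trans[OF norm_ge_zero drift_le[of T]] by simp

lemma time_le:
  assumes "k \<le> n" "real n * dt \<le> T"
  shows "real k * dt \<in> {0..T}"
proof -
  have "real k * dt \<le> real n * dt"
    using assms(1) dt_pos by (intro mult_right_mono) auto
  then have "real k * dt \<le> T" using assms(2) by linarith
  then show ?thesis using dt_pos by simp
qed

lemma x_Suc: "x (Suc n) = x n + dt *\<^sub>R w (Suc n)"
  using position_step[of n, symmetric] dt_pos eps_pos by (simp add: w_def)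

lemma w_Suc: "w (Suc n) - (lam * b (real n * dt) (x n)) *\<^sub>R perp (w (Suc n))
    = w n + lam *\<^sub>R E (real n * dt) (x n)"
proof -
  let ?\<beta> = "b (real n * dt) (x n)"
  have "(1 / \<epsilon>) *\<^sub>R (v (Suc n) - v n) = lam *\<^sub>R (\<epsilon> *\<^sub>R ((1 / dt) *\<^sub>R (v (Suc n) - v n)))"
    using dt_pos eps_pos by (simp add: lam_def power2_eq_square)
  also have "\<dots> = (lam * ?\<beta> / \<epsilon>) *\<^sub>R perp (v (Suc n)) + lam *\<^sub>R E (real n * dt) (x n)"
    unfolding velocity_step by (simp add: wedge_e3_eq_perp scaleR_add_right)
  finally show ?thesis
    unfolding w_def perp_scaleR scaleR_scaleR by (simp add: algebra_simps)
qed

lemma lam_b0_gap_le: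
  assumes "real n * dt \<le> T"
  shows "lam * b0 * gap n \<le> norm (w n - U n)"
proof -
  let ?\<beta> = "b (real n * dt) (x n)"
  have b0_le: "b0 \<le> \<bar>?\<beta>\<bar>"
    using b_ge time_le[OF order_refl assms] by blast
  then have "E (real n * dt) (x n) = - ?\<beta> *\<^sub>R perp (U n)"
    unfolding U_def using b0_pos by (intro field_eq_perp_drift) auto
  then have "w (Suc n) - (lam * ?\<beta>) *\<^sub>R perp (w (Suc n)) = w n - (lam * ?\<beta>) *\<^sub>R perp (U n)"
    by (simp add: w_Suc)
  then have "\<bar>lam * ?\<beta>\<bar> * gap n \<le> norm (w n - U n)"
    unfolding gap_def by (rule norm_relaxation_le)
  moreover have "lam * b0 * gap n \<le> \<bar>lam * ?\<beta>\<bar> * gap n"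
    using b0_le lam_pos by (intro mult_right_mono) (auto simp: abs_mult gap_def)
  ultimately show ?thesis by linarith
qed

lemma drift_step_le:
  assumes "real (Suc n) * dt \<le> T"
  shows "norm (U (Suc n) - U n) \<le> LU * dt * (1 + MU + gap n)"
proof -
  have t: "real n * dt \<in> {0..T}" and t': "real (Suc n) * dt \<in> {0..T}"
    using time_le[OF le_SucI[OF order_refl] assms] time_le[OF order_refl assms] by auto
  have "norm (w (Suc n)) \<le> gap n + norm (U n)"
    unfolding gap_def using norm_triangle_ineq2[of "w (Suc n)" "U n"] by simp
  also have "\<dots> \<le> gap n + MU"
    using drift_le[OF t] by (simp add: U_def)
  finally have w_le: "norm (w (Suc n)) \<le> gap n + MU" .
  have "norm (U (Suc n) - U n) \<le> LU * dist (real (Suc n) * dt, x (Suc n)) (real n * dt, x n)"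
    using lipschitz_onD[OF drift_lipschitz, of "(real (Suc n) * dt, x (Suc n))" "(real n * dt, x n)"]
      t t' by (simp add: U_def dist_norm)
  also have "\<dots> \<le> LU * (dt + dt * norm (w (Suc n)))"
    using norm_Pair_le[of dt "dt *\<^sub>R w (Suc n)"] LU_nonneg dt_pos
    by (intro mult_left_mono) (auto simp: x_Suc dist_norm algebra_simps)
  also have "\<dots> \<le> LU * dt * (1 + MU + gap n)"
    using w_le LU_nonneg dt_pos mult_left_mono[OF w_le, of "LU * dt"]
    by (simp add: algebra_simps)
  finally show ?thesis .
qed

lemma gap_Suc_le:
  assumes "real (Suc n) * dt \<le> T"
  shows "gap (Suc n) \<le> gap n / 2 + LU * (1 + MU) / b0 * dt / lam"
proof -
  have "2 * (1 + LU) \<le> lam * b0"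
    using stiff by (simp add: lam_def)
  then have "1 + LU * dt \<le> lam * b0 / 2"
    using mult_left_le[OF dt_le_1 LU_nonneg] by (simp add: field_simps)
  then have damped: "(1 + LU * dt) * gap n \<le> lam * b0 / 2 * gap n"
    by (intro mult_right_mono) (auto simp: gap_def)
  have "lam * b0 * gap (Suc n) \<le> norm (w (Suc n) - U (Suc n))"
    by (rule lam_b0_gap_le[OF assms])
  also have "\<dots> \<le> gap n + norm (U (Suc n) - U n)"
    unfolding gap_def using norm_triangle_ineq4[of "w (Suc n) - U n" "U (Suc n) - U n"]
    by (simp add: algebra_simps)
  also have "\<dots> \<le> (1 + LU * dt) * gap n + LU * dt * (1 + MU)"
    using drift_step_le[OF assms] by (simp add: algebra_simps)
  also have "\<dots> \<le> lam * b0 / 2 * gap n + LU * dt * (1 + MU)"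
    using damped by simp
  finally show ?thesis
    using lam_pos b0_pos by (simp add: field_simps)
qed

lemma gap_le_geometric:
  assumes "real n * dt \<le> T"
  shows "gap n \<le> (1 / 2) ^ n * norm (w 0 - U 0) / (lam * b0) + 2 * (LU * (1 + MU) / b0 * dt / lam)"
proof -
  have "0 \<le> MU"
    using time_le[OF le0 assms] by (intro MU_nonneg) simp
  have "gap n \<le> (1 / 2) ^ n * gap 0 + 2 * (LU * (1 + MU) / b0 * dt / lam)"
  proof (rule halving_recurrence_le)
    fix k assume "k < n"
    then have "real (Suc k) * dt \<le> T"
      using time_le[of "Suc k" n] assms by auto
    then show "gap (Suc k) \<le> gap k / 2 + LU * (1 + MU) / b0 * dt / lam"
      by (rule gap_Suc_le)
  qed (use LU_nonneg \<open>0 \<le> MU\<close> b0_pos dt_pos lam_pos in simp)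
  also have "(1 / 2) ^ n * gap 0 \<le> (1 / 2) ^ n * (norm (w 0 - U 0) / (lam * b0))"
    using lam_b0_gap_le[of 0] time_le[OF le0 assms] lam_pos b0_pos
    by (intro mult_left_mono) (auto simp: field_simps)
  finally show ?thesis by simp
qed

lemma sum_gap_le:
  assumes "real n * dt \<le> T"
  shows "(\<Sum>k<n. dt * gap k) \<le> dt / lam * (2 * norm (w 0 - U 0) / b0 + 2 * (LU * (1 + MU) / b0) * T)"
proof -
  define D where "D = norm (w 0 - U 0) / (lam * b0)"
  define c where "c = 2 * (LU * (1 + MU) / b0 * dt / lam)"
  have "(\<Sum>k<n. dt * gap k) \<le> (\<Sum>k<n. dt * ((1 / 2) ^ k * D + c))"
  proof (rule sum_mono)
    fix k assume "k \<in> {..<n}"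
    then have "real k * dt \<le> T"
      using time_le[of k n] assms by auto
    then show "dt * gap k \<le> dt * ((1 / 2) ^ k * D + c)"
      using gap_le_geometric dt_pos by (simp add: D_def c_def)
  qed
  also have "\<dots> = dt * D * (\<Sum>k<n. (1 / 2) ^ k) + real n * dt * c"
    by (simp add: sum.distrib sum_distrib_left algebra_simps)
  also have "\<dots> \<le> dt * D * 2 + T * c"
  proof (rule add_mono)
    have "(\<Sum>k<n. (1 / 2 :: real) ^ k) \<le> 2"
      using geometric_sum_less[of "1 / 2 :: real" "{..<n}"] by simp
    then show "dt * D * (\<Sum>k<n. (1 / 2) ^ k) \<le> dt * D * 2"
      using dt_pos lam_pos b0_pos by (intro mult_left_mono) (auto simp: D_def)
    show "real n * dt * c \<le> T * c"
      using assms dt_pos lam_pos b0_pos LU_nonneg MU_nonneg[of] time_le[OF le0 assms]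
      by (intro mult_right_mono) (simp_all add: c_def)
  qed
  also have "\<dots> = dt / lam * (2 * norm (w 0 - U 0) / b0 + 2 * (LU * (1 + MU) / b0) * T)"
    using lam_pos b0_pos by (simp add: D_def c_def field_simps)
  finally show ?thesis .
qed

lemma position_error_le:
  assumes y0: "y 0 = x 0"
    and y_step: "\<And>n. (1 / dt) *\<^sub>R (y (Suc n) - y n) = drift E b (real n * dt) (y n)"
    and n: "real n * dt \<le> T"
  shows "norm (x n - y n) \<le> exp (LU * T) * (\<Sum>k<n. dt * gap k)"
proof -
  have "norm (x n - y n) \<le> (1 + LU * dt) ^ n * (\<Sum>k<n. dt * gap k)"
  proof (rule discrete_gronwall)
    fix k assume "k < n"
    then have t: "real k * dt \<in> {0..T}"
      using time_le[of k n] n by auto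
    have "y (Suc k) = y k + dt *\<^sub>R drift E b (real k * dt) (y k)"
      using y_step[of k, symmetric] dt_pos by simp
    let ?p = "dt *\<^sub>R (U k - drift E b (real k * dt) (y k))" and ?q = "dt *\<^sub>R (w (Suc k) - U k)"
    have "x (Suc k) - y (Suc k) = (x k - y k) + ?p + ?q"
      using \<open>y (Suc k) = _\<close> by (simp add: x_Suc algebra_simps)
    then have triangle: "norm (x (Suc k) - y (Suc k))
        \<le> norm (x k - y k) + dt * norm (U k - drift E b (real k * dt) (y k)) + dt * gap k"
      using dt_pos norm_triangle_ineq[of "x k - y k + ?p" ?q] norm_triangle_ineq[of "x k - y k" ?p]
      by (simp add: gap_def)
    have "norm (U k - drift E b (real k * dt) (y k)) \<le> LU * norm (x k - y k)"
      using lipschitz_onD[OF drift_lipschitz, of "(real k * dt, x k)" "(real k * dt, y k)"] t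
      by (simp add: U_def dist_norm)
    then have "dt * norm (U k - drift E b (real k * dt) (y k)) \<le> LU * dt * norm (x k - y k)"
      using dt_pos mult_left_mono[of _ _ dt] by (simp add: mult.left_commute)
    then show "norm (x (Suc k) - y (Suc k)) \<le> (1 + LU * dt) * norm (x k - y k) + dt * gap k"
      using triangle by (simp add: algebra_simps)
  qed (use y0 LU_nonneg dt_pos in \<open>auto simp: gap_def\<close>)
  also have "\<dots> \<le> exp (LU * T) * (\<Sum>k<n. dt * gap k)"
  proof (rule mult_right_mono)
    have "(1 + LU * dt) ^ n \<le> exp (real n * (LU * dt))"
      using mult_nonneg_nonneg[OF LU_nonneg less_imp_le[OF dt_pos]]
      by (intro one_plus_power_le_exp) linarith
    also have "\<dots> \<le> exp (LU * T)"
      using n LU_nonneg mult_left_mono[OF n LU_nonneg] by (simp add: algebra_simps)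
    finally show "(1 + LU * dt) ^ n \<le> exp (LU * T)" .
  qed (use dt_pos in \<open>auto intro!: sum_nonneg simp: gap_def\<close>)
  finally show ?thesis .
qed

lemma position_error_bound:
  assumes "y 0 = x 0"
    and "\<And>n. (1 / dt) *\<^sub>R (y (Suc n) - y n) = drift E b (real n * dt) (y n)"
    and n: "real n * dt \<le> T"
  shows "norm (x n - y n) \<le> exp (LU * T) * (2 / b0 + 2 * (LU * (1 + MU) / b0) * T) * dt / (dt / \<epsilon>\<^sup>2)
    * (1 + norm ((1 / \<epsilon>) *\<^sub>R v 0 - drift E b 0 (x 0)))"
proof -
  define D where "D = norm ((1 / \<epsilon>) *\<^sub>R v 0 - drift E b 0 (x 0))"
  define K where "K = LU * (1 + MU) / b0"
  have "D = norm (w 0 - U 0)"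
    by (simp add: D_def w_def U_def)
  have T: "0 \<le> T" and "0 \<le> D" and "0 \<le> K"
    using time_le[OF le0 n] MU_nonneg LU_nonneg b0_pos by (auto simp: D_def K_def)
  have "norm (x n - y n) \<le> exp (LU * T) * (dt / lam * (2 * D / b0 + 2 * K * T))"
    using order_trans[OF position_error_le[OF assms] mult_left_mono[OF sum_gap_le[OF n] exp_ge_zero]]
    by (simp add: \<open>D = norm (w 0 - U 0)\<close> K_def)
  also have "\<dots> \<le> exp (LU * T) * (dt / lam * ((2 / b0 + 2 * K * T) * (1 + D)))"
  proof -
    have "(2 / b0 + 2 * K * T) * (1 + D) = 2 * D / b0 + 2 * K * T + (2 / b0 + 2 * K * T * D)"
      by (simp add: algebra_simps add_divide_distrib)
    moreover have "0 \<le> 2 / b0 + 2 * K * T * D"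
      using \<open>0 \<le> D\<close> \<open>0 \<le> K\<close> T b0_pos by simp
    ultimately show ?thesis
      using dt_pos lam_pos by (intro mult_left_mono) auto
  qed
  also have "\<dots> = exp (LU * T) * (2 / b0 + 2 * K * T) * dt / lam * (1 + D)"
    by (simp add: mult_ac)
  finally show ?thesis
    unfolding D_def K_def lam_def .
qed

end

lemma drift_bounded_lipschitzE:
  assumes "0 \<le> T"
    and "bounded ((\<lambda>(t, x). E t x) ` ({0..T} \<times> UNIV))"
    and "\<exists>L. L-lipschitz_on ({0..T} \<times> UNIV) (\<lambda>(t, x). E t x)"
    and "\<exists>L. L-lipschitz_on ({0..T} \<times> UNIV) (\<lambda>(t, x). b t x)"
    and "\<exists>b0 > 0. \<forall>t\<in>{0..T}. \<forall>x. \<bar>b t x\<bar> \<ge> b0"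
  obtains b0 MU LU where "0 < b0" "\<And>t z. t \<in> {0..T} \<Longrightarrow> b0 \<le> \<bar>b t z\<bar>"
    "\<And>t z. t \<in> {0..T} \<Longrightarrow> norm (drift E b t z) \<le> MU"
    "LU-lipschitz_on ({0..T} \<times> UNIV) (\<lambda>(t, z). drift E b t z)"
proof -
  obtain ME where ME: "\<And>t z. t \<in> {0..T} \<Longrightarrow> norm (E t z) \<le> ME"
    using assms(2) by (force simp: bounded_iff)
  have "0 \<le> ME"
    using order_trans[OF norm_ge_zero ME[of 0]] assms(1) by simp
  obtain LE Lb b0 where LE: "LE-lipschitz_on ({0..T} \<times> UNIV) (\<lambda>(t, x). E t x)"
    and Lb: "Lb-lipschitz_on ({0..T} \<times> UNIV) (\<lambda>(t, x). b t x)"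
    and "0 < b0" and b_ge: "\<And>t z. t \<in> {0..T} \<Longrightarrow> b0 \<le> \<bar>b t z\<bar>"
    using assms(3-5) by blast
  have "norm (drift E b t z) \<le> ME / b0" if "t \<in> {0..T}" for t z
    using ME b_ge \<open>0 < b0\<close> that by (blast intro: norm_drift_le)
  moreover have "(Lb * ME / b0\<^sup>2 + LE / b0)-lipschitz_on ({0..T} \<times> UNIV) (\<lambda>(t, z). drift E b t z)"
    using ME b_ge \<open>0 \<le> ME\<close> \<open>0 < b0\<close> by (intro lipschitz_on_drift[OF LE Lb]) auto
  ultimately show ?thesis
    using that \<open>0 < b0\<close> b_ge by blast
qed

theorem theorem4p1:
  fixes T :: real
    and E :: "real \<Rightarrow> real^2 \<Rightarrow> real^2"
    and b :: "real \<Rightarrow> real^2 \<Rightarrow> real"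
  assumes T_pos: "T > 0"
    and E_bdd: "bounded ((\<lambda>(t, x). E t x) ` ({0..T} \<times> UNIV))"
    and E_lip: "\<exists>L. L-lipschitz_on ({0..T} \<times> UNIV) (\<lambda>(t, x). E t x)"
    and b_bdd: "bounded ((\<lambda>(t, x). b t x) ` ({0..T} \<times> UNIV))"
    and b_lip: "\<exists>L. L-lipschitz_on ({0..T} \<times> UNIV) (\<lambda>(t, x). b t x)"
    and b_inf: "\<exists>b0 > 0. \<forall>t\<in>{0..T}. \<forall>x. \<bar>b t x\<bar> \<ge> b0"
  shows "\<exists>C > 0. \<exists>lam0 > 0. \<forall>(dt::real) (\<epsilon>::real) (x::nat \<Rightarrow> real^2) (v::nat \<Rightarrow> real^2) (y::nat \<Rightarrow> real^2).
           0 < dt \<and> dt \<le> 1 \<and> \<epsilon> > 0 \<and> dt / \<epsilon>\<^sup>2 \<ge> lam0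
         \<and> (\<forall>n. \<epsilon> *\<^sub>R ((1 / dt) *\<^sub>R (x (Suc n) - x n)) = v (Suc n))
         \<and> (\<forall>n. \<epsilon> *\<^sub>R ((1 / dt) *\<^sub>R (v (Suc n) - v n))
                = (1 / \<epsilon>) *\<^sub>R wedge_e3 (v (Suc n)) (b (real n * dt) (x n)) + E (real n * dt) (x n))
         \<and> y 0 = x 0
         \<and> (\<forall>n. (1 / dt) *\<^sub>R (y (Suc n) - y n) = drift E b (real n * dt) (y n))
         \<longrightarrow> (\<forall>n. real n * dt \<le> T \<longrightarrow>
               norm (x n - y n) \<le> C * dt / (dt / \<epsilon>\<^sup>2)
                  * (1 + norm ((1 / \<epsilon>) *\<^sub>R v 0 - drift E b 0 (x 0))))"
proof -
  obtain b0 MU LU where "0 < b0" and b_ge: "\<And>t z. t \<in> {0..T} \<Longrightarrow> b0 \<le> \<bar>b t z\<bar>"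
    and drift_le: "\<And>t z. t \<in> {0..T} \<Longrightarrow> norm (drift E b t z) \<le> MU"
    and drift_lipschitz: "LU-lipschitz_on ({0..T} \<times> UNIV) (\<lambda>(t, z). drift E b t z)"
    using drift_bounded_lipschitzE[OF less_imp_le[OF T_pos] E_bdd E_lip b_lip b_inf] by blast
  have "0 \<le> LU" and "0 \<le> MU"
    using lipschitz_on_nonneg[OF drift_lipschitz] order_trans[OF norm_ge_zero drift_le[of 0]] T_pos
    by auto
  define C where "C = exp (LU * T) * (2 / b0 + 2 * (LU * (1 + MU) / b0) * T)"
  define lam0 where "lam0 = 2 * (1 + LU) / b0"
  have "0 < C"
    unfolding C_def using \<open>0 \<le> LU\<close> \<open>0 \<le> MU\<close> T_pos \<open>0 < b0\<close>
    by (intro mult_pos_pos exp_gt_zero add_pos_nonneg) simp_all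
  have "0 < lam0"
    using \<open>0 \<le> LU\<close> \<open>0 < b0\<close> by (simp add: lam0_def)
  show ?thesis
    apply (rule exI[of _ C], rule conjI[OF \<open>0 < C\<close>], rule exI[of _ lam0], rule conjI[OF \<open>0 < lam0\<close>])
    apply (intro allI impI)
    subgoal premises scheme for dt \<epsilon> x v y n
    proof -
      interpret guiding_center_scheme E b T b0 MU LU dt \<epsilon> x v
        using scheme \<open>0 < b0\<close> b_ge drift_le drift_lipschitz
        by unfold_locales (simp_all add: lam0_def pos_divide_le_eq)
      show ?thesis
        unfolding C_def using scheme by (intro position_error_bound) auto
    qed
    done
qed

end
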